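(* In the 2-sided error regime, there exists an algorithm that finds a realized spanning tree with high probability, using $O(m\log m)$ queries in a moldgraph of $m$ edges.
   Context: Problem (graph connectivity with noisy queries): a graph $G=(V,E)$, the moldgraph, with $m$ edges is given. An adversary selects an arbitrary connected spanning subgraph of $G$ to be realized. The algorithm may query an oracle on any edge $e$ (``Is $e$ realized?'') and receives ``Yes''/``No''; each query costs $1$, and answers to distinct queries (including repeated queries of the same edge) are independent. Goal: output a spanning tree of $G$ all of whose edges are realized. In the 2-sided error regime, each answer is wrong with a constant probability $p<1/2$. ``With high probability'' means with probability tending to $1$ as $m\to\infty$. *)

theory Defs
  imports "HOL-Probability.Probability"
begin

definition is_graph :: "nat set \<Rightarrow> nat set set \<Rightarrow> bool" where
  "is_graph V E \<longleftrightarrow> finite V \<and> (\<forall>e\<in>E. e \<subseteq> V \<and> card e = 2)"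

definition adj :: "nat set set \<Rightarrow> (nat \<times> nat) set" where
  "adj F = {(u, v). {u, v} \<in> F}"

definition connected_on :: "nat set \<Rightarrow> nat set set \<Rightarrow> bool" where
  "connected_on V F \<longleftrightarrow> (\<forall>u\<in>V. \<forall>v\<in>V. (u, v) \<in> (adj F)\<^sup>*)"

(* T is a spanning tree of (V, E): connected spanning subgraph, acyclic
   (every edge is a bridge) *)
definition spanning_tree :: "nat set \<Rightarrow> nat set set \<Rightarrow> nat set set \<Rightarrow> bool" where
  "spanning_tree V E T \<longleftrightarrow> T \<subseteq> E \<and> connected_on V T \<and>
     (\<forall>e\<in>T. \<forall>u v. e = {u, v} \<longrightarrow> (u, v) \<notin> (adj (T - {e}))\<^sup>*)"

datatype step = Query "nat set" | Output "nat set set"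

(* An algorithm: given the moldgraph (V,E) and the history of
   (queried edge, answer) pairs, chooses (a distribution over) the next step. *)
type_synonym algorithm = "nat set \<Rightarrow> nat set set \<Rightarrow> (nat set \<times> bool) list \<Rightarrow> step pmf"

(* Execution against realized edge set R with noise p, with a budget of at
   most k further queries.  Each query answer is independently flipped with
   probability p.  Result None = budget exceeded. *)
primrec run_alg :: "real \<Rightarrow> nat set \<Rightarrow> nat set set \<Rightarrow> nat set set \<Rightarrow> algorithm
    \<Rightarrow> nat \<Rightarrow> (nat set \<times> bool) list \<Rightarrow> nat set set option pmf" where
  "run_alg p V E R alg 0 hist =
     bind_pmf (alg V E hist) (\<lambda>s. case s of Output T \<Rightarrow> return_pmf (Some T)
                                         | Query e \<Rightarrow> return_pmf None)"
| "run_alg p V E R alg (Suc k) hist =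
     bind_pmf (alg V E hist) (\<lambda>s. case s of Output T \<Rightarrow> return_pmf (Some T)
        | Query e \<Rightarrow> bind_pmf (bernoulli_pmf p)
             (\<lambda>flip. run_alg p V E R alg k (hist @ [(e, (e \<in> R) \<noteq> flip)])))"

end

(*
  Query every edge k = O(log m) times and keep the edges on which the majority of the answers
  was Yes.  If every majority is right, the kept edges are exactly the realized ones, and these
  contain a spanning tree.  The failure probability is bounded by a martingale form of the
  Chernoff bound: with t = 2 - 2p and s = p t + (1 - p) / t = 1/2 + 2p(1 - p) < 1, give each edge
  the weight t^(wrong answers - correct answers) * s^(queries still to be made).  A query leaves
  the expected total weight unchanged, an edge whose majority is wrong ends with weight at least 1,
  and the initial total weight is m s^k <= 1/m once k >= -2 ln m / ln s.
*)
theory Submission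
  imports Defs
begin

lemma measure_bind_bernoulli_pmf:
  assumes "0 \<le> p" "p \<le> 1"
  shows "measure_pmf.prob (bind_pmf (bernoulli_pmf p) F) A =
         p * measure_pmf.prob (F True) A + (1 - p) * measure_pmf.prob (F False) A"
proof -
  have "emeasure (bind_pmf (bernoulli_pmf p) F) A =
        emeasure (F True) A * ennreal p + emeasure (F False) A * ennreal (1 - p)"
    using assms by simp
  then show ?thesis
    using assms by (simp add: measure_pmf.emeasure_eq_measure ennreal_mult'[symmetric]
                              ennreal_plus[symmetric] del: ennreal_plus)
qed

lemma measure_bind_pmf_le:
  assumes "\<And>x. x \<in> set_pmf M \<Longrightarrow> measure_pmf.prob (f x) A \<le> c"
  shows "measure_pmf.prob (bind_pmf M f) A \<le> c"
proof -
  obtain x where "x \<in> set_pmf M"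
    using set_pmf_not_empty[of M] by blast
  then have "0 \<le> c"
    using assms measure_nonneg order_trans by blast
  have "emeasure (bind_pmf M f) A = (\<integral>\<^sup>+x. emeasure (f x) A \<partial>M)"
    by simp
  also have "\<dots> \<le> (\<integral>\<^sup>+x. ennreal c \<partial>M)"
    using assms by (intro nn_integral_mono_AE)
      (auto simp: AE_measure_pmf_iff measure_pmf.emeasure_eq_measure intro: ennreal_leI)
  also have "\<dots> = ennreal c"
    by (simp add: measure_pmf.emeasure_space_1)
  finally show ?thesis
    using \<open>0 \<le> c\<close> by (simp add: measure_pmf.emeasure_eq_measure)
qed

lemma measure_pmf_Some_image:
  assumes "None \<notin> set_pmf D"
  shows "measure_pmf.prob D (Some ` A) = 1 - measure_pmf.prob D (Some ` (- A))"
proof -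
  have "- Some ` A \<inter> set_pmf D = Some ` (- A) \<inter> set_pmf D"
    using assms by (auto intro: notin_range_Some) (metis ComplI image_eqI not_None_eq)
  then have "measure_pmf.prob D (- Some ` A) = measure_pmf.prob D (Some ` (- A))"
    by (metis measure_Int_set_pmf)
  then show ?thesis
    using measure_pmf.prob_compl[of "Some ` A" D] by (simp add: Compl_eq_Diff_UNIV)
qed

lemma None_notin_run_alg:
  fixes \<rho> :: "(nat set \<times> bool) list \<Rightarrow> nat"
  assumes query: "\<And>h e b. Query e \<in> set_pmf (alg V E h) \<Longrightarrow> \<rho> (h @ [(e, b)]) < \<rho> h"
    and "\<rho> h \<le> B"
  shows "None \<notin> set_pmf (run_alg p V E R alg B h)"
  using \<open>\<rho> h \<le> B\<close>
proof (induction B arbitrary: h)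
  case 0
  then have "Query e \<notin> set_pmf (alg V E h)" for e
    using query by fastforce
  then show ?case
    by (auto split: step.splits)
next
  case (Suc B)
  have "None \<notin> set_pmf (run_alg p V E R alg B (h @ [(e, b)]))"
    if "Query e \<in> set_pmf (alg V E h)" for e b
    using query[OF that, of b] Suc by (intro Suc.IH) simp
  then show ?case
    by (auto split: step.splits)
qed

text \<open>Optional stopping for a nonnegative supermartingale \<open>\<Phi>\<close> on query histories.\<close>

lemma measure_run_alg_le_potential:
  fixes \<Phi> :: "(nat set \<times> bool) list \<Rightarrow> real"
  assumes "0 \<le> p" "p \<le> 1" and nonneg: "\<And>h. 0 \<le> \<Phi> h"
    and query: "\<And>h e. Query e \<in> set_pmf (alg V E h) \<Longrightarrow>
                  p * \<Phi> (h @ [(e, e \<notin> R)]) + (1 - p) * \<Phi> (h @ [(e, e \<in> R)]) \<le> \<Phi> h"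
    and stop: "\<And>h T. Output T \<in> set_pmf (alg V E h) \<Longrightarrow> T \<notin> Good \<Longrightarrow> 1 \<le> \<Phi> h"
  shows "measure_pmf.prob (run_alg p V E R alg B h) (Some ` (- Good)) \<le> \<Phi> h"
proof (induction B arbitrary: h)
  case 0
  show ?case
    by (auto intro!: measure_bind_pmf_le simp: nonneg stop split: step.splits split: split_indicator)
next
  case (Suc B)
  have "measure_pmf.prob (bind_pmf (bernoulli_pmf p)
          (\<lambda>flip. run_alg p V E R alg B (h @ [(e, (e \<in> R) \<noteq> flip)]))) (Some ` (- Good)) \<le> \<Phi> h"
    if query_step: "Query e \<in> set_pmf (alg V E h)" for e
  proof -
    have "p * measure_pmf.prob (run_alg p V E R alg B (h @ [(e, e \<notin> R)])) (Some ` (- Good))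
          + (1 - p) * measure_pmf.prob (run_alg p V E R alg B (h @ [(e, e \<in> R)])) (Some ` (- Good))
          \<le> p * \<Phi> (h @ [(e, e \<notin> R)]) + (1 - p) * \<Phi> (h @ [(e, e \<in> R)])"
      using \<open>0 \<le> p\<close> \<open>p \<le> 1\<close> by (intro add_mono mult_left_mono Suc.IH) auto
    also have "\<dots> \<le> \<Phi> h"
      using query[OF query_step] .
    finally show ?thesis
      using \<open>0 \<le> p\<close> \<open>p \<le> 1\<close> by (simp add: measure_bind_bernoulli_pmf)
  qed
  then show ?case
    unfolding run_alg.simps
    by (intro measure_bind_pmf_le) (auto simp: nonneg stop split: step.splits split: split_indicator)
qed

lemma is_graph_finite_edges: "is_graph V E \<Longrightarrow> finite E"
  unfolding is_graph_def by (metis Pow_iff finite_Pow_iff finite_subset subsetI)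

lemma connected_on_Diff_cycle_edge:
  assumes "connected_on V T" "e = {u, v}" "(u, v) \<in> (adj (T - {e}))\<^sup>*"
  shows "connected_on V (T - {e})"
proof -
  have sym: "(adj (T - {e}))\<inverse> = adj (T - {e})"
    unfolding adj_def by (auto simp: insert_commute)
  have "(v, u) \<in> (adj (T - {e}))\<^sup>*"
    using rtrancl_converseI[OF assms(3)] sym by simp
  then have "adj T \<subseteq> (adj (T - {e}))\<^sup>*"
    using assms(2,3) by (auto simp: adj_def doubleton_eq_iff)
  then have "(adj T)\<^sup>* \<subseteq> (adj (T - {e}))\<^sup>*"
    by (metis rtrancl_subset_rtrancl)
  then show ?thesis
    using assms(1) unfolding connected_on_def by blast
qed

text \<open>A connected subgraph with the fewest edges has no edge on a cycle.\<close>

lemma connected_on_obtains_spanning_tree: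
  assumes "finite R" "R \<subseteq> E" "connected_on V R"
  obtains T where "spanning_tree V E T" "T \<subseteq> R"
proof -
  obtain T where T: "T \<subseteq> R" "connected_on V T"
    and minimal: "\<And>T'. T' \<subseteq> R \<Longrightarrow> connected_on V T' \<Longrightarrow> card T \<le> card T'"
    using ex_has_least_nat[of "\<lambda>T. T \<subseteq> R \<and> connected_on V T" R card] assms(3) by blast
  have "(u, v) \<notin> (adj (T - {e}))\<^sup>*" if "e \<in> T" "e = {u, v}" for e u v
  proof
    assume "(u, v) \<in> (adj (T - {e}))\<^sup>*"
    then have "card T \<le> card (T - {e})"
      using T connected_on_Diff_cycle_edge[OF T(2) \<open>e = {u, v}\<close>] by (intro minimal) auto
    moreover have "card (T - {e}) < card T"
      using T(1) assms(1) \<open>e \<in> T\<close> by (meson card_Diff1_less finite_subset)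
    ultimately show False
      by simp
  qed
  then show thesis
    using T assms(2) that unfolding spanning_tree_def by blast
qed

definition times_queried :: "nat set \<Rightarrow> (nat set \<times> bool) list \<Rightarrow> nat" where
  "times_queried e h = count_list h (e, True) + count_list h (e, False)"

definition majority_edges :: "nat set set \<Rightarrow> (nat set \<times> bool) list \<Rightarrow> nat set set" where
  "majority_edges E h = {e \<in> E. count_list h (e, False) < count_list h (e, True)}"

definition repeated_majority_step :: "nat \<Rightarrow> nat set \<Rightarrow> nat set set \<Rightarrow> (nat set \<times> bool) list \<Rightarrow> step" where
  "repeated_majority_step k V E h =
     (if \<exists>e\<in>E. times_queried e h < k then Query (SOME e. e \<in> E \<and> times_queried e h < k)
      else Output (SOME T. spanning_tree V E T \<and> T \<subseteq> majority_edges E h))"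

definition decay :: "real \<Rightarrow> real" where
  "decay p = 1 / 2 + 2 * p * (1 - p)"

definition repetition_rate :: "real \<Rightarrow> real" where
  "repetition_rate p = - 2 / ln (decay p)"

definition repetitions :: "real \<Rightarrow> nat \<Rightarrow> nat" where
  "repetitions p m = nat \<lceil>repetition_rate p * ln (real m)\<rceil>"

definition majority_alg :: "real \<Rightarrow> algorithm" where
  "majority_alg p V E h = return_pmf (repeated_majority_step (repetitions p (card E)) V E h)"

lemma repeated_majority_step_QueryD:
  assumes "repeated_majority_step k V E h = Query e"
  shows "e \<in> E" "times_queried e h < k"
proof -
  have "\<exists>e\<in>E. times_queried e h < k" "e = (SOME e. e \<in> E \<and> times_queried e h < k)"
    using assms unfolding repeated_majority_step_def by (auto split: if_splits)
  then show "e \<in> E" "times_queried e h < k"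
    by (metis (mono_tags, lifting) someI_ex)+
qed

lemma repeated_majority_step_OutputD:
  assumes "repeated_majority_step k V E h = Output T"
  shows "\<forall>e\<in>E. k \<le> times_queried e h"
    and "T = (SOME T. spanning_tree V E T \<and> T \<subseteq> majority_edges E h)"
  using assms unfolding repeated_majority_step_def by (auto split: if_splits simp: not_less)

lemma times_queried_snoc [simp]:
  "times_queried e' (h @ [(e, b)]) = times_queried e' h + (if e' = e then 1 else 0)"
  by (cases b) (auto simp: times_queried_def)

lemma sum_remaining_queries_snoc_less:
  assumes "finite E" "e \<in> E" "times_queried e h < k"
  shows "(\<Sum>e'\<in>E. k - times_queried e' (h @ [(e, b)])) < (\<Sum>e'\<in>E. k - times_queried e' h)"
  using assms by (intro sum_strict_mono_ex1) auto

lemma None_notin_run_majority_alg: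
  assumes "finite E" "card E * repetitions p (card E) \<le> B"
  shows "None \<notin> set_pmf (run_alg p V E R (majority_alg p) B [])"
proof (rule None_notin_run_alg[where \<rho> = "\<lambda>h. \<Sum>e\<in>E. repetitions p (card E) - times_queried e h"])
  fix h e b
  assume "Query e \<in> set_pmf (majority_alg p V E h)"
  then have "repeated_majority_step (repetitions p (card E)) V E h = Query e"
    by (simp add: majority_alg_def)
  with assms(1) show "(\<Sum>e'\<in>E. repetitions p (card E) - times_queried e' (h @ [(e, b)]))
      < (\<Sum>e'\<in>E. repetitions p (card E) - times_queried e' h)"
    by (intro sum_remaining_queries_snoc_less repeated_majority_step_QueryD)
next
  show "(\<Sum>e\<in>E. repetitions p (card E) - times_queried e []) \<le> B"
    using assms(2) by (simp add: times_queried_def)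
qed

lemma decay_pos: "0 \<le> p \<Longrightarrow> p \<le> 1 \<Longrightarrow> 0 < decay p"
  unfolding decay_def by (simp add: add_pos_nonneg)

lemma decay_less_one: "p \<noteq> 1 / 2 \<Longrightarrow> decay p < 1"
proof -
  assume "p \<noteq> 1 / 2"
  then have "0 < (1 - 2 * p)\<^sup>2"
    by simp
  then show "decay p < 1"
    unfolding decay_def by (simp add: power2_eq_square algebra_simps)
qed

lemma decay_eq_mean_weight_factor:
  "p < 1 \<Longrightarrow> p * (2 - 2 * p) + (1 - p) / (2 - 2 * p) = decay p"
  unfolding decay_def by (simp add: field_simps)

definition discrepancy :: "nat set set \<Rightarrow> nat set \<Rightarrow> (nat set \<times> bool) list \<Rightarrow> int" where
  "discrepancy R e h = int (count_list h (e, e \<notin> R)) - int (count_list h (e, e \<in> R))"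

definition potential ::
    "real \<Rightarrow> nat \<Rightarrow> nat set set \<Rightarrow> nat set set \<Rightarrow> (nat set \<times> bool) list \<Rightarrow> real" where
  "potential p k R E h =
     (\<Sum>e\<in>E. (2 - 2 * p) powi discrepancy R e h * decay p ^ (k - times_queried e h))"

lemma potential_Nil: "potential p k R E [] = card E * decay p ^ k"
  by (simp add: potential_def discrepancy_def times_queried_def)

lemma potential_nonneg: "0 \<le> p \<Longrightarrow> p \<le> 1 \<Longrightarrow> 0 \<le> potential p k R E h"
  unfolding potential_def using decay_pos[of p] by (intro sum_nonneg) simp

lemma potential_ge_one:
  assumes "0 \<le> p" "p \<le> 1 / 2" "finite E" "e \<in> E" "k \<le> times_queried e h" "0 \<le> discrepancy R e h"
  shows "1 \<le> potential p k R E h"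
proof -
  have "1 \<le> (2 - 2 * p) powi discrepancy R e h * decay p ^ (k - times_queried e h)"
    using assms by simp
  also have "\<dots> \<le> potential p k R E h"
    unfolding potential_def using assms decay_pos[of p]
    by (intro member_le_sum[where i = e]) simp_all
  finally show ?thesis .
qed

lemma potential_query_step:
  assumes "p < 1" "finite E" "e \<in> E" "times_queried e h < k"
  shows "p * potential p k R E (h @ [(e, e \<notin> R)]) + (1 - p) * potential p k R E (h @ [(e, e \<in> R)])
         = potential p k R E h"
proof -
  define t where "t = 2 - 2 * p"
  define w where "w h' e' = t powi discrepancy R e' h' * decay p ^ (k - times_queried e' h')" for h' e'
  have split: "potential p k R E h' = w h' e + (\<Sum>e'\<in>E - {e}. w h' e')" for h'
    unfolding potential_def w_def t_def using assms(2,3) by (simp add: sum.remove)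
  have others: "(\<Sum>e'\<in>E - {e}. w (h @ [(e, b)]) e') = (\<Sum>e'\<in>E - {e}. w h e')" for b
    unfolding w_def discrepancy_def by (intro sum.cong) auto
  have "t \<noteq> 0"
    using assms(1) by (simp add: t_def)
  have up: "discrepancy R e (h @ [(e, e \<notin> R)]) = discrepancy R e h + 1"
    and down: "discrepancy R e (h @ [(e, e \<in> R)]) = discrepancy R e h - 1"
    by (simp_all add: discrepancy_def)
  define n where "n = k - Suc (times_queried e h)"
  have remaining: "k - times_queried e h = Suc n"
    using assms(4) by (simp add: n_def)
  have "p * w (h @ [(e, e \<notin> R)]) e + (1 - p) * w (h @ [(e, e \<in> R)]) e
        = p * (t powi discrepancy R e h * t * decay p ^ n)
          + (1 - p) * (t powi discrepancy R e h / t * decay p ^ n)"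
    unfolding w_def up down n_def using \<open>t \<noteq> 0\<close> by (simp add: power_int_add_1 power_int_diff)
  also have "\<dots> = t powi discrepancy R e h * decay p ^ n * (p * t + (1 - p) / t)"
    by (simp add: algebra_simps)
  also have "\<dots> = w h e"
    unfolding w_def remaining t_def decay_eq_mean_weight_factor[OF assms(1)] by simp
  finally show ?thesis
    unfolding split others by (simp add: algebra_simps)
qed

lemma majority_edges_eq:
  assumes "R \<subseteq> E" "\<forall>e\<in>E. discrepancy R e h < 0"
  shows "majority_edges E h = R"
proof -
  have "e \<in> R \<longleftrightarrow> count_list h (e, False) < count_list h (e, True)" if "e \<in> E" for e
    using assms(2) that by (cases "e \<in> R") (auto simp: discrepancy_def)
  then show ?thesis
    using assms(1) unfolding majority_edges_def by auto
qed

lemma measure_run_majority_alg_fails_le: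
  assumes "0 \<le> p" "p < 1 / 2" "finite E" "R \<subseteq> E" "connected_on V R"
  shows "measure_pmf.prob (run_alg p V E R (majority_alg p) B [])
           (Some ` (- {T. spanning_tree V E T \<and> T \<subseteq> R}))
         \<le> card E * decay p ^ repetitions p (card E)"
proof -
  let ?k = "repetitions p (card E)"
  have "measure_pmf.prob (run_alg p V E R (majority_alg p) B [])
          (Some ` (- {T. spanning_tree V E T \<and> T \<subseteq> R})) \<le> potential p ?k R E []"
  proof (rule measure_run_alg_le_potential)
    fix h e
    assume "Query e \<in> set_pmf (majority_alg p V E h)"
    then have "repeated_majority_step ?k V E h = Query e"
      by (simp add: majority_alg_def)
    with assms show "p * potential p ?k R E (h @ [(e, e \<notin> R)])
        + (1 - p) * potential p ?k R E (h @ [(e, e \<in> R)]) \<le> potential p ?k R E h"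
      by (simp add: potential_query_step repeated_majority_step_QueryD)
  next
    fix h T
    assume "Output T \<in> set_pmf (majority_alg p V E h)"
      and bad: "T \<notin> {T. spanning_tree V E T \<and> T \<subseteq> R}"
    then have step: "repeated_majority_step ?k V E h = Output T"
      by (simp add: majority_alg_def)
    obtain T' where T': "spanning_tree V E T' \<and> T' \<subseteq> R"
      using connected_on_obtains_spanning_tree[OF finite_subset[OF assms(4,3)] assms(4,5)] by blast
    have "majority_edges E h \<noteq> R"
    proof
      assume "majority_edges E h = R"
      then have "T = (SOME T. spanning_tree V E T \<and> T \<subseteq> R)"
        using repeated_majority_step_OutputD(2)[OF step] by simp
      then show False
        using someI[of "\<lambda>T. spanning_tree V E T \<and> T \<subseteq> R", OF T'] bad by simp
    qed
    then obtain e where "e \<in> E" "\<not> discrepancy R e h < 0"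
      using majority_edges_eq[OF assms(4)] by blast
    then show "1 \<le> potential p ?k R E h"
      using assms repeated_majority_step_OutputD(1)[OF step] by (intro potential_ge_one) auto
  qed (use assms potential_nonneg in simp_all)
  then show ?thesis
    by (simp add: potential_Nil)
qed

lemma card_mult_decay_pow_repetitions_le:
  assumes "0 \<le> p" "p < 1 / 2" "1 \<le> m"
  shows "real m * decay p ^ repetitions p m \<le> 1 / real m"
proof -
  have s: "0 < decay p" "decay p < 1"
    using assms decay_pos decay_less_one by auto
  have m: "0 < real m"
    using assms(3) by simp
  have "decay p ^ repetitions p m = decay p powr real (repetitions p m)"
    using s by (simp add: powr_realpow)
  also have "\<dots> \<le> decay p powr (repetition_rate p * ln (real m))"
    using s unfolding repetitions_def by (intro powr_mono' real_nat_ceiling_ge) auto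
  also have "\<dots> = real m powr (- 2)"
    using s m by (simp add: powr_def repetition_rate_def)
  also have "\<dots> = 1 / real m ^ 2"
    using m by (simp add: powr_neg_numeral)
  finally have "real m * decay p ^ repetitions p m \<le> real m * (1 / real m ^ 2)"
    using m by (intro mult_left_mono) auto
  then show ?thesis
    using m by (simp add: power2_eq_square)
qed

lemma card_mult_repetitions_le:
  assumes "0 \<le> p" "p < 1 / 2" "3 \<le> m"
  shows "m * repetitions p m \<le> nat \<lfloor>(repetition_rate p + 1) * real m * ln (real m)\<rfloor>"
proof (rule le_nat_floor)
  have "exp 1 \<le> real m"
    using e_less_272 assms(3) by simp
  then have ln_ge_1: "1 \<le> ln (real m)"
    using assms(3) by (simp add: ln_ge_iff)
  have "0 < repetition_rate p"
    using decay_pos[of p] decay_less_one[of p] assms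
    unfolding repetition_rate_def by (simp add: divide_neg_neg)
  then have "real (repetitions p m) \<le> repetition_rate p * ln (real m) + 1"
    unfolding repetitions_def using ln_ge_1 by (simp add: of_nat_nat of_int_ceiling_le_add_one)
  also have "\<dots> \<le> (repetition_rate p + 1) * ln (real m)"
    using ln_ge_1 by (simp add: algebra_simps)
  finally have "real (repetitions p m) \<le> (repetition_rate p + 1) * ln (real m)" .
  from mult_left_mono[OF this, of "real m"]
  show "real (m * repetitions p m) \<le> (repetition_rate p + 1) * real m * ln (real m)"
    by (simp add: algebra_simps)
qed

theorem lemma1:
  fixes p :: real
  assumes "0 \<le> p" and "p < 1/2"
  shows "\<exists>(alg :: algorithm) (C :: real) (\<delta> :: nat \<Rightarrow> real) (N :: nat).
           \<delta> \<longlonglongrightarrow> 0 \<and>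
           (\<forall>V E R. is_graph V E \<and> card E \<ge> N \<and> R \<subseteq> E \<and> connected_on V R \<longrightarrow>
              (let D = run_alg p V E R alg (nat \<lfloor>C * real (card E) * ln (real (card E))\<rfloor>) []
               in measure_pmf.prob D {None} = 0 \<and>
                  measure_pmf.prob D {Some T | T. spanning_tree V E T \<and> T \<subseteq> R}
                    \<ge> 1 - \<delta> (card E)))"
proof (intro exI[of _ "majority_alg p"] exI[of _ "repetition_rate p + 1"]
    exI[of _ "\<lambda>m. 1 / real m"] exI[of _ 3] conjI allI impI)
  show "(\<lambda>m. 1 / real m) \<longlonglongrightarrow> 0"
    by (rule lim_inverse_n')
next
  fix V E R
  assume "is_graph V E \<and> 3 \<le> card E \<and> R \<subseteq> E \<and> connected_on V R"
  then have graph: "finite E" "3 \<le> card E" "R \<subseteq> E" "connected_on V R"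
    using is_graph_finite_edges by auto
  let ?B = "nat \<lfloor>(repetition_rate p + 1) * real (card E) * ln (real (card E))\<rfloor>"
  define D where "D = run_alg p V E R (majority_alg p) ?B []"
  have "None \<notin> set_pmf D"
    unfolding D_def using graph(1) card_mult_repetitions_le[OF assms graph(2)]
    by (rule None_notin_run_majority_alg)
  moreover have "measure_pmf.prob D (Some ` (- {T. spanning_tree V E T \<and> T \<subseteq> R})) \<le> 1 / card E"
    using measure_run_majority_alg_fails_le[OF assms graph(1,3,4), of ?B]
      card_mult_decay_pow_repetitions_le[OF assms, of "card E"] graph(2)
    unfolding D_def by simp
  moreover have "{Some T | T. spanning_tree V E T \<and> T \<subseteq> R} = Some ` {T. spanning_tree V E T \<and> T \<subseteq> R}"
    by blast
  ultimately have "measure_pmf.prob D {None} = 0 \<and>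
      1 - 1 / real (card E) \<le> measure_pmf.prob D {Some T | T. spanning_tree V E T \<and> T \<subseteq> R}"
    using measure_pmf_Some_image[of D "{T. spanning_tree V E T \<and> T \<subseteq> R}"]
    by (simp add: measure_pmf_zero_iff)
  then show "let D = run_alg p V E R (majority_alg p) ?B []
      in measure_pmf.prob D {None} = 0 \<and>
         1 - 1 / real (card E) \<le> measure_pmf.prob D {Some T | T. spanning_tree V E T \<and> T \<subseteq> R}"
    unfolding D_def Let_def .
qed

end
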